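(* Let $(a_0,\ldots,a_n)$ be a finite sequence of positive integers. For every $\varepsilon>0$ there is $m_0>0$ such that for every integer $m\ge m_0$ and every positive integer $N$, $$\Phi(\beta^{N+1})-\Phi(\beta^N)<\varepsilon.$$
   Context: For positive integers $d_0,d_1,\ldots$, $[d_0,d_1,d_2,\ldots]$ denotes the continued fraction $\cfrac{1}{d_0+\cfrac{1}{d_1+\cfrac{1}{d_2+\cdots}}}$, and for $\beta=[d_0,d_1,\ldots]$ we write $\alpha_j(\beta)=[d_j,d_{j+1},\ldots]$. $\Phi(\beta)=\sum_{k\ge 0}\alpha_0(\beta)\cdots\alpha_{k-1}(\beta)\log\frac{1}{\alpha_k(\beta)}$ is the Yoccoz Brjuno function. For integers $m\ge1$, $N\ge1$, $\beta^N$ is the number whose digits (indexed from $0$) are $a_0,\ldots,a_n$ in positions $0,\ldots,n$, $N$ in position $n+m$, and $1$ in all other positions. *)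

theory Defs
  imports Complex_Main
begin

fun cf_trunc :: "(nat \<Rightarrow> nat) \<Rightarrow> nat \<Rightarrow> real" where
  "cf_trunc d 0 = 0"
| "cf_trunc d (Suc k) = 1 / (real (d 0) + cf_trunc (\<lambda>i. d (Suc i)) k)"

definition cf :: "(nat \<Rightarrow> nat) \<Rightarrow> real" where
  "cf d = lim (\<lambda>k. cf_trunc d k)"

definition cf_alpha :: "(nat \<Rightarrow> nat) \<Rightarrow> nat \<Rightarrow> real" where
  "cf_alpha d j = cf (\<lambda>i. d (i + j))"

definition brjuno_Phi :: "(nat \<Rightarrow> nat) \<Rightarrow> real" where
  "brjuno_Phi d = (\<Sum>k. (\<Prod>i<k. cf_alpha d i) * ln (1 / cf_alpha d k))"

text \<open>Digits of beta^N: a_0..a_n at positions 0..n, N at position n+m, 1 elsewhere.\<close>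
definition beta_digits :: "(nat \<Rightarrow> nat) \<Rightarrow> nat \<Rightarrow> nat \<Rightarrow> nat \<Rightarrow> nat \<Rightarrow> nat" where
  "beta_digits a n m N i = (if i \<le> n then a i else if i = n + m then N else 1)"

end

theory Submission
  imports Defs
begin

text \<open>
  Write \<open>\<alpha>\<^sub>j, \<Phi>\<^sub>j\<close> for \<open>\<alpha>\<^sub>j(\<beta>\<^sup>N)\<close> and \<open>\<Phi>(\<alpha>\<^sub>j(\<beta>\<^sup>N))\<close>, and \<open>\<alpha>'\<^sub>j, \<Phi>'\<^sub>j\<close> for the same
  quantities of \<open>\<beta>\<^sup>N\<^sup>+\<^sup>1\<close>. Both satisfy \<open>\<alpha>\<^sub>j = 1/(d\<^sub>j + \<alpha>\<^sub>j\<^sub>+\<^sub>1)\<close> and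
  \<open>\<Phi>\<^sub>j = log (1/\<alpha>\<^sub>j) + \<alpha>\<^sub>j \<Phi>\<^sub>j\<^sub>+\<^sub>1\<close>, with the same digits \<open>d\<^sub>j \<le> D = max a\<^sub>i\<close> for
  \<open>j < M = n + m - 1\<close>. Running these recursions backwards from \<open>M\<close>, the difference
  \<open>\<alpha>\<^sub>j - \<alpha>'\<^sub>j\<close> is multiplied by \<open>\<alpha>\<^sub>j \<alpha>'\<^sub>j\<close> and the difference \<open>\<Phi>\<^sub>j - \<Phi>'\<^sub>j\<close> by
  \<open>\<alpha>'\<^sub>j \<le> (D + 1)/(D + 2)\<close>, up to an error proportional to \<open>\<alpha>\<^sub>j\<^sub>+\<^sub>1 - \<alpha>'\<^sub>j\<^sub>+\<^sub>1\<close>.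
  Hence \<open>\<bar>\<Phi>(\<beta>\<^sup>N) - \<Phi>(\<beta>\<^sup>N\<^sup>+\<^sup>1)\<bar> \<le> ((D + 1)/(D + 2))\<^sup>M W\<close>, where \<open>W\<close> bounds the
  differences at \<open>M\<close>. These depend on \<open>N\<close> only through \<open>x = \<alpha>\<^sub>M\<^sub>+\<^sub>1 = 1/(N + g)\<close> and
  \<open>x' = 1/(N + 1 + g)\<close>, \<open>g = (\<surd>5 - 1)/2\<close>, via quantities such as \<open>x log (1/x) \<le> 1\<close> and
  \<open>log (1/x') - log (1/x) \<le> 1\<close>; so \<open>W\<close> depends neither on \<open>N\<close> nor on \<open>m\<close>.
\<close>

definition ones_from :: "nat \<Rightarrow> (nat \<Rightarrow> nat) \<Rightarrow> bool" where
  "ones_from K d \<longleftrightarrow> (\<forall>i. 1 \<le> d i) \<and> (\<forall>i\<ge>K. d i = 1)"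

lemma ones_from_shift: "ones_from K d \<Longrightarrow> ones_from K (\<lambda>i. d (i + j))"
  unfolding ones_from_def by auto

lemma ones_from_Suc: "ones_from K d \<Longrightarrow> ones_from K (\<lambda>i. d (Suc i))"
  unfolding ones_from_def by auto

lemma ones_from_digit_ge_1: "ones_from K d \<Longrightarrow> 1 \<le> real (d j)"
  unfolding ones_from_def by simp

definition inv_golden_ratio :: real where
  "inv_golden_ratio = (sqrt 5 - 1) / 2"

lemma inv_golden_ratio_pos: "0 < inv_golden_ratio"
  and inv_golden_ratio_less_1: "inv_golden_ratio < 1"
proof -
  have "1 < sqrt (5::real)" by (simp add: real_less_rsqrt)
  moreover have "sqrt (5::real) < 3" by (rule real_less_lsqrt) auto
  ultimately show "0 < inv_golden_ratio" "inv_golden_ratio < 1"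
    unfolding inv_golden_ratio_def by auto
qed

lemma inv_golden_ratio_fixpoint: "1 / (1 + inv_golden_ratio) = inv_golden_ratio"
proof -
  have "inv_golden_ratio * (1 + inv_golden_ratio) = 1"
    unfolding inv_golden_ratio_def by (simp add: field_simps power2_eq_square)
  then show ?thesis using inv_golden_ratio_pos by (simp add: field_simps)
qed

lemma cf_trunc_nonneg: "0 \<le> cf_trunc d k"
  by (induction k arbitrary: d) auto

lemma cf_trunc_ones_dist:
  "\<bar>cf_trunc (\<lambda>_. 1) k - inv_golden_ratio\<bar> \<le> inv_golden_ratio ^ k * inv_golden_ratio"
proof (induction k)
  case 0
  then show ?case using inv_golden_ratio_pos by simp
next
  case (Suc k)
  let ?g = inv_golden_ratio and ?t = "cf_trunc (\<lambda>_. 1) k"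
  have t: "0 \<le> ?t" by (rule cf_trunc_nonneg)
  have g: "0 < ?g" by (rule inv_golden_ratio_pos)
  have "cf_trunc (\<lambda>_. 1) (Suc k) - ?g = 1 / (1 + ?t) - 1 / (1 + ?g)"
    by (simp add: inv_golden_ratio_fixpoint)
  also have "\<dots> = (?g - ?t) / (1 + ?t) * (1 / (1 + ?g))"
    using t g by (simp add: field_simps)
  also have "\<dots> = ?g * (?g - ?t) / (1 + ?t)"
    by (simp add: inv_golden_ratio_fixpoint)
  finally have "\<bar>cf_trunc (\<lambda>_. 1) (Suc k) - ?g\<bar> = ?g * \<bar>?t - ?g\<bar> / (1 + ?t)"
    using t g by (simp add: abs_mult abs_minus_commute)
  also have "\<dots> \<le> ?g * \<bar>?t - ?g\<bar>"
    using t g by (intro divide_left_mono[of 1, simplified]) auto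
  also have "\<dots> \<le> ?g * (?g ^ k * ?g)"
    using Suc g by (intro mult_left_mono) auto
  finally show ?case by simp
qed

lemma cf_trunc_ones_LIMSEQ: "cf_trunc (\<lambda>_. 1) \<longlonglongrightarrow> inv_golden_ratio"
proof -
  have "(\<lambda>k. inv_golden_ratio ^ k) \<longlonglongrightarrow> 0"
    using inv_golden_ratio_pos inv_golden_ratio_less_1 by (intro LIMSEQ_power_zero) auto
  then have "(\<lambda>k. cf_trunc (\<lambda>_. 1) k - inv_golden_ratio) \<longlonglongrightarrow> 0"
    by (rule tendsto_0_le[where K = inv_golden_ratio])
      (use cf_trunc_ones_dist inv_golden_ratio_pos in simp)
  then show ?thesis by (rule LIM_zero_cancel)
qed

lemma cf_ones: "cf (\<lambda>_. 1) = inv_golden_ratio"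
  unfolding cf_def using cf_trunc_ones_LIMSEQ by (rule limI)

lemma cf_trunc_LIMSEQ_Suc:
  assumes "cf_trunc (\<lambda>i. d (Suc i)) \<longlonglongrightarrow> L" "1 \<le> real (d 0)" "0 \<le> L"
  shows "cf_trunc d \<longlonglongrightarrow> 1 / (real (d 0) + L)"
proof -
  have "(\<lambda>k. 1 / (real (d 0) + cf_trunc (\<lambda>i. d (Suc i)) k)) \<longlonglongrightarrow> 1 / (real (d 0) + L)"
    using assms by (intro tendsto_intros) auto
  then have "(\<lambda>k. cf_trunc d (Suc k)) \<longlonglongrightarrow> 1 / (real (d 0) + L)" by simp
  then show ?thesis by (rule LIMSEQ_imp_Suc)
qed

lemma cf_trunc_converges:
  "ones_from K d \<Longrightarrow> \<exists>L. cf_trunc d \<longlonglongrightarrow> L \<and> 0 < L \<and> L \<le> 1"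
proof (induction K arbitrary: d)
  case 0
  then have "d = (\<lambda>_. 1)" unfolding ones_from_def by auto
  then show ?case
    using cf_trunc_ones_LIMSEQ inv_golden_ratio_pos inv_golden_ratio_less_1 by auto
next
  case (Suc K)
  have "ones_from K (\<lambda>i. d (Suc i))" using Suc.prems unfolding ones_from_def by auto
  then obtain L where L: "cf_trunc (\<lambda>i. d (Suc i)) \<longlonglongrightarrow> L" "0 < L" "L \<le> 1"
    using Suc.IH by blast
  have d0: "1 \<le> real (d 0)" using Suc.prems by (rule ones_from_digit_ge_1)
  have "cf_trunc d \<longlonglongrightarrow> 1 / (real (d 0) + L)" using L d0 by (intro cf_trunc_LIMSEQ_Suc) auto
  moreover have "0 < 1 / (real (d 0) + L)" "1 / (real (d 0) + L) \<le> 1" using d0 L by auto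
  ultimately show ?case by blast
qed

lemma cf_trunc_LIMSEQ_cf: "ones_from K d \<Longrightarrow> cf_trunc d \<longlonglongrightarrow> cf d"
  using cf_trunc_converges[of K d] unfolding cf_def by (auto simp: limI)

lemma cf_pos: "ones_from K d \<Longrightarrow> 0 < cf d"
  and cf_le_1: "ones_from K d \<Longrightarrow> cf d \<le> 1"
  using cf_trunc_converges[of K d] unfolding cf_def by (auto simp: limI)

lemma cf_Suc:
  assumes "ones_from K d"
  shows "cf d = 1 / (real (d 0) + cf (\<lambda>i. d (Suc i)))"
proof -
  have "cf_trunc d \<longlonglongrightarrow> 1 / (real (d 0) + cf (\<lambda>i. d (Suc i)))"
    using cf_trunc_LIMSEQ_cf[OF ones_from_Suc[OF assms]] cf_pos[OF ones_from_Suc[OF assms]]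
      ones_from_digit_ge_1[OF assms] by (intro cf_trunc_LIMSEQ_Suc) auto
  then show ?thesis unfolding cf_def by (rule limI)
qed

lemma cf_alpha_Suc_shift: "cf_alpha d (Suc j) = cf_alpha (\<lambda>i. d (Suc i)) j"
  unfolding cf_alpha_def by simp

lemma cf_alpha_pos: "ones_from K d \<Longrightarrow> 0 < cf_alpha d j"
  and cf_alpha_le_1: "ones_from K d \<Longrightarrow> cf_alpha d j \<le> 1"
  unfolding cf_alpha_def by (auto intro: cf_pos cf_le_1 ones_from_shift)

lemma cf_alpha_rec:
  "ones_from K d \<Longrightarrow> cf_alpha d j = 1 / (real (d j) + cf_alpha d (Suc j))"
  unfolding cf_alpha_def using cf_Suc[OF ones_from_shift, of K d j] by simp

lemma cf_alpha_ones:
  assumes "ones_from K d" "K \<le> j"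
  shows "cf_alpha d j = inv_golden_ratio"
proof -
  have "(\<lambda>i. d (i + j)) = (\<lambda>_. 1)" using assms unfolding ones_from_def by auto
  then show ?thesis unfolding cf_alpha_def using cf_ones by simp
qed

lemma cf_alpha_lower:
  assumes "ones_from K d" "real (d j) \<le> D"
  shows "1 / (D + 1) \<le> cf_alpha d j"
proof -
  have "0 < real (d j) + cf_alpha d (Suc j)" "real (d j) + cf_alpha d (Suc j) \<le> D + 1"
    using ones_from_digit_ge_1[OF assms(1), of j] cf_alpha_pos[OF assms(1), of "Suc j"]
      cf_alpha_le_1[OF assms(1), of "Suc j"] assms(2) by linarith+
  then show ?thesis unfolding cf_alpha_rec[OF assms(1), of j] by (intro divide_left_mono) auto
qed

lemma cf_alpha_upper:
  assumes "ones_from K d" "real (d (Suc j)) \<le> D"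
  shows "cf_alpha d j \<le> (D + 1) / (D + 2)"
proof -
  have D: "1 \<le> D" using assms(2) ones_from_digit_ge_1[OF assms(1)] by (rule order_trans[rotated])
  have "1 + 1 / (D + 1) \<le> real (d j) + cf_alpha d (Suc j)"
    using ones_from_digit_ge_1[OF assms(1), of j] cf_alpha_lower[OF assms] by linarith
  moreover have "0 < 1 + 1 / (D + 1)" using D by (simp add: add_pos_nonneg)
  ultimately have "cf_alpha d j \<le> 1 / (1 + 1 / (D + 1))"
    unfolding cf_alpha_rec[OF assms(1), of j] by (intro divide_left_mono) auto
  also have "\<dots> = (D + 1) / (D + 2)" using D by (simp add: field_simps)
  finally show ?thesis .
qed

definition brjuno_term :: "(nat \<Rightarrow> nat) \<Rightarrow> nat \<Rightarrow> real" where
  "brjuno_term d k = (\<Prod>i<k. cf_alpha d i) * ln (1 / cf_alpha d k)"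

lemma brjuno_Phi_eq_suminf: "brjuno_Phi d = suminf (brjuno_term d)"
  unfolding brjuno_Phi_def brjuno_term_def ..

lemma brjuno_term_nonneg:
  assumes "ones_from K d"
  shows "0 \<le> brjuno_term d k"
  unfolding brjuno_term_def using cf_alpha_pos[OF assms] cf_alpha_le_1[OF assms]
  by (intro mult_nonneg_nonneg prod_nonneg) (auto intro: less_imp_le)

lemma summable_brjuno_term:
  assumes "ones_from K d"
  shows "summable (brjuno_term d)"
proof -
  let ?g = inv_golden_ratio and ?c = "(\<Prod>i<K. cf_alpha d i) * ln (1 / inv_golden_ratio)"
  have prod_tail: "(\<Prod>i<k + K. cf_alpha d i) = (\<Prod>i<K. cf_alpha d i) * ?g ^ k" for k
    by (induction k) (simp_all add: cf_alpha_ones[OF assms])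
  have "brjuno_term d (k + K) = ?c * ?g ^ k" for k
    unfolding brjuno_term_def prod_tail using cf_alpha_ones[OF assms, of "k + K"] by simp
  moreover have "summable (\<lambda>k. ?c * ?g ^ k)"
    using inv_golden_ratio_pos inv_golden_ratio_less_1
    by (intro summable_mult summable_geometric) auto
  ultimately show ?thesis using summable_iff_shift[of "brjuno_term d" K] by simp
qed

lemma brjuno_Phi_nonneg: "ones_from K d \<Longrightarrow> 0 \<le> brjuno_Phi d"
  unfolding brjuno_Phi_eq_suminf by (intro suminf_nonneg summable_brjuno_term brjuno_term_nonneg)

lemma brjuno_Phi_Suc:
  assumes "ones_from K d"
  shows "brjuno_Phi d = ln (1 / cf d) + cf d * brjuno_Phi (\<lambda>i. d (Suc i))"
proof -
  have alpha_0: "cf_alpha d 0 = cf d" unfolding cf_alpha_def by simp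
  have term_Suc: "brjuno_term d (Suc k) = cf d * brjuno_term (\<lambda>i. d (Suc i)) k" for k
    unfolding brjuno_term_def prod.lessThan_Suc_shift alpha_0 cf_alpha_Suc_shift by simp
  have "suminf (brjuno_term d) = brjuno_term d 0 + (\<Sum>k. brjuno_term d (Suc k))"
    using suminf_split_head[OF summable_brjuno_term[OF assms]] by simp
  also have "(\<Sum>k. brjuno_term d (Suc k)) = cf d * suminf (brjuno_term (\<lambda>i. d (Suc i)))"
    unfolding term_Suc by (intro suminf_mult summable_brjuno_term[OF ones_from_Suc[OF assms]])
  also have "brjuno_term d 0 = ln (1 / cf d)" unfolding brjuno_term_def alpha_0 by simp
  finally show ?thesis unfolding brjuno_Phi_eq_suminf .
qed

definition brjuno_tail :: "(nat \<Rightarrow> nat) \<Rightarrow> nat \<Rightarrow> real" where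
  "brjuno_tail d j = brjuno_Phi (\<lambda>i. d (i + j))"

lemma brjuno_tail_0 [simp]: "brjuno_tail d 0 = brjuno_Phi d"
  unfolding brjuno_tail_def by simp

lemma brjuno_tail_rec:
  "ones_from K d \<Longrightarrow>
    brjuno_tail d j = ln (1 / cf_alpha d j) + cf_alpha d j * brjuno_tail d (Suc j)"
  unfolding brjuno_tail_def cf_alpha_def using brjuno_Phi_Suc[OF ones_from_shift, of K d j] by simp

lemma brjuno_tail_nonneg: "ones_from K d \<Longrightarrow> 0 \<le> brjuno_tail d j"
  unfolding brjuno_tail_def by (intro brjuno_Phi_nonneg ones_from_shift)

lemma brjuno_tail_ones:
  assumes "ones_from K d" "K \<le> j"
  shows "brjuno_tail d j = brjuno_Phi (\<lambda>_. 1)"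
proof -
  have "(\<lambda>i. d (i + j)) = (\<lambda>_. 1)" using assms unfolding ones_from_def by auto
  then show ?thesis unfolding brjuno_tail_def by simp
qed

lemma abs_ln_diff_le:
  fixes x y :: real
  assumes "1 \<le> x" "1 \<le> y"
  shows "\<bar>ln x - ln y\<bar> \<le> \<bar>x - y\<bar>"
proof -
  have "ln u - ln v \<le> \<bar>u - v\<bar>" if "1 \<le> u" "1 \<le> v" for u v :: real
  proof -
    have "ln u - ln v = ln (u / v)" using that by (simp add: ln_div)
    also have "\<dots> \<le> u / v - 1" using that by (intro ln_le_minus_one) auto
    also have "\<dots> = (u - v) / v" using that by (simp add: field_simps)
    also have "\<dots> \<le> \<bar>u - v\<bar> / v" using that by (intro divide_right_mono) auto
    also have "\<dots> \<le> \<bar>u - v\<bar>" using that by (simp add: divide_le_eq mult_le_cancel_left1)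
    finally show ?thesis .
  qed
  from this[OF assms] this[OF assms(2,1)] show ?thesis by (simp add: abs_minus_commute)
qed

lemma mult_ln_inverse_le_1:
  fixes x :: real
  assumes "0 < x"
  shows "x * ln (1 / x) \<le> 1"
proof -
  have "x * ln (1 / x) \<le> x * (1 / x - 1)"
    using assms by (intro mult_left_mono ln_le_minus_one) auto
  also have "\<dots> \<le> 1" using assms by (simp add: field_simps)
  finally show ?thesis .
qed

lemma brjuno_step_lipschitz:
  fixes c s s' P P' :: real
  assumes "1 \<le> c" "0 < s" "0 < s'" "0 \<le> P"
  shows "\<bar>(ln (c + s) + P / (c + s)) - (ln (c + s') + P' / (c + s'))\<bar>
    \<le> \<bar>s - s'\<bar> * (1 + P) + \<bar>P - P'\<bar> / (c + s')"
proof -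
  have ln_diff: "\<bar>ln (c + s) - ln (c + s')\<bar> \<le> \<bar>s - s'\<bar>"
    using abs_ln_diff_le[of "c + s" "c + s'"] assms by simp
  have denom: "1 \<le> (c + s) * (c + s')"
    using mult_mono[of 1 "c + s" 1 "c + s'"] assms by simp
  have "1 / (c + s) - 1 / (c + s') = (s' - s) / ((c + s) * (c + s'))"
    using assms by (simp add: field_simps)
  also have "\<bar>\<dots>\<bar> \<le> \<bar>s - s'\<bar>"
    using denom by (simp add: abs_div abs_minus_commute divide_le_eq mult_le_cancel_left1)
  finally have inv_diff: "\<bar>1 / (c + s) - 1 / (c + s')\<bar> * P \<le> \<bar>s - s'\<bar> * P"
    using assms by (intro mult_right_mono) auto
  have "(ln (c + s) + P / (c + s)) - (ln (c + s') + P' / (c + s'))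
      = (ln (c + s) - ln (c + s')) + (1 / (c + s) - 1 / (c + s')) * P + (P - P') / (c + s')"
    by (simp add: algebra_simps diff_divide_distrib)
  also have "\<bar>\<dots>\<bar> \<le> \<bar>ln (c + s) - ln (c + s')\<bar> + \<bar>1 / (c + s) - 1 / (c + s')\<bar> * P
      + \<bar>P - P'\<bar> / (c + s')"
    using assms by (simp add: abs_mult abs_div abs_triangle_ineq3 add_mono
        order.trans[OF abs_triangle_ineq])
  finally show ?thesis using ln_diff inv_diff by (simp add: algebra_simps)
qed

lemma prod_cf_alpha_nonneg: "ones_from K d \<Longrightarrow> 0 \<le> (\<Prod>i\<in>A. cf_alpha d i)"
  using cf_alpha_pos by (intro prod_nonneg) (auto intro: less_imp_le)

lemma prod_cf_alpha_le_1: "ones_from K d \<Longrightarrow> (\<Prod>i\<in>A. cf_alpha d i) \<le> 1"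
  using cf_alpha_pos cf_alpha_le_1 by (intro prod_le_1) (auto intro: less_imp_le)

locale agreeing_digits =
  fixes d d' :: "nat \<Rightarrow> nat" and K M :: nat and D :: real
  assumes ones_from: "ones_from K d" "ones_from K d'"
    and agree: "\<And>j. j < M \<Longrightarrow> d' j = d j"
    and digits_le: "\<And>j. j \<le> M \<Longrightarrow> real (d j) \<le> D"
      "\<And>j. j \<le> M \<Longrightarrow> real (d' j) \<le> D"
begin

lemma swap: "agreeing_digits d' d K M D"
  using ones_from agree digits_le by unfold_locales (auto simp: eq_commute)

lemma D_ge_1: "1 \<le> D"
  using ones_from_digit_ge_1[OF ones_from(1), of 0] digits_le(1)[of 0] by simp

lemma alpha_lower: "j \<le> M \<Longrightarrow> 1 / (D + 1) \<le> cf_alpha d j"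
  by (intro cf_alpha_lower[OF ones_from(1)] digits_le(1))

lemma alpha_upper: "j < M \<Longrightarrow> cf_alpha d j \<le> (D + 1) / (D + 2)"
  by (intro cf_alpha_upper[OF ones_from(1)] digits_le(1)) simp

lemma ln_inverse_alpha_le: "j \<le> M \<Longrightarrow> ln (1 / cf_alpha d j) \<le> ln (D + 1)"
  using alpha_lower[of j] cf_alpha_pos[OF ones_from(1), of j] D_ge_1
  by (simp add: field_simps)

lemma prod_alpha_le_power: "(\<Prod>i\<in>{0..<M}. cf_alpha d i) \<le> ((D + 1) / (D + 2)) ^ M"
proof -
  have "(\<Prod>i\<in>{0..<M}. cf_alpha d i) \<le> (\<Prod>i\<in>{0..<M}. (D + 1) / (D + 2))"
    using alpha_upper cf_alpha_pos[OF ones_from(1)] by (intro prod_mono) (auto intro: less_imp_le)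
  then show ?thesis by simp
qed

lemma alpha_gap_ge: "j < M \<Longrightarrow> 1 \<le> (D + 1) * (D + 2) * cf_alpha d' j * (1 - cf_alpha d j)"
proof -
  assume "j < M"
  then have "1 / (D + 1) \<le> cf_alpha d' j" "1 / (D + 2) \<le> 1 - cf_alpha d j"
    using agreeing_digits.alpha_lower[OF swap, of j] alpha_upper[of j] D_ge_1 by (auto simp: field_simps)
  then have "1 / (D + 1) * (1 / (D + 2)) \<le> cf_alpha d' j * (1 - cf_alpha d j)"
    using D_ge_1 cf_alpha_pos[OF ones_from(2), of j] by (intro mult_mono) auto
  then have "1 / ((D + 1) * (D + 2)) \<le> cf_alpha d' j * (1 - cf_alpha d j)" by simp
  then show ?thesis using D_ge_1 by (simp add: pos_divide_le_eq mult_ac)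
qed

lemma brjuno_tail_le:
  "j \<le> M \<Longrightarrow>
    brjuno_tail d j \<le> (D + 2) * ln (D + 1) + (\<Prod>i\<in>{j..<M}. cf_alpha d i) * brjuno_tail d M"
proof (induction j rule: inc_induct)
  case base
  then show ?case using D_ge_1 by simp
next
  case (step j)
  let ?a = "cf_alpha d j" and ?L = "(D + 2) * ln (D + 1)"
  have a: "0 < ?a" "?a \<le> (D + 1) / (D + 2)"
    using cf_alpha_pos[OF ones_from(1)] alpha_upper step.hyps by auto
  have "?a * brjuno_tail d (Suc j)
      \<le> ?a * (?L + (\<Prod>i\<in>{Suc j..<M}. cf_alpha d i) * brjuno_tail d M)"
    using step.IH a by (intro mult_left_mono) auto
  also have "\<dots> = ?a * ?L + (\<Prod>i\<in>{j..<M}. cf_alpha d i) * brjuno_tail d M"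
    using step.hyps by (simp add: prod.atLeast_Suc_lessThan algebra_simps)
  also have "?a * ?L \<le> (D + 1) / (D + 2) * ?L"
    using a D_ge_1 by (intro mult_right_mono) auto
  moreover have "ln (D + 1) + (D + 1) / (D + 2) * ?L = ?L"
    using D_ge_1 by (simp add: field_simps)
  ultimately show ?case
    using brjuno_tail_rec[OF ones_from(1), of j] ln_inverse_alpha_le[of j] step.hyps by simp
qed

lemma alpha_diff_eq:
  "j \<le> M \<Longrightarrow> \<bar>cf_alpha d j - cf_alpha d' j\<bar>
    = (\<Prod>i\<in>{j..<M}. cf_alpha d i) * (\<Prod>i\<in>{j..<M}. cf_alpha d' i)
      * \<bar>cf_alpha d M - cf_alpha d' M\<bar>"
proof (induction j rule: inc_induct)
  case base
  then show ?case by simp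
next
  case (step j)
  let ?s = "cf_alpha d (Suc j)" and ?s' = "cf_alpha d' (Suc j)" and ?c = "real (d j)"
  have rec: "cf_alpha d j = 1 / (?c + ?s)" "cf_alpha d' j = 1 / (?c + ?s')"
    using cf_alpha_rec[OF ones_from(1), of j] cf_alpha_rec[OF ones_from(2), of j] agree step.hyps
    by auto
  have pos: "0 < ?s" "0 < ?s'" "1 \<le> ?c"
    using cf_alpha_pos[OF ones_from(1)] cf_alpha_pos[OF ones_from(2)]
      ones_from_digit_ge_1[OF ones_from(1)] by auto
  have "cf_alpha d j - cf_alpha d' j = 1 / (?c + ?s) * (1 / (?c + ?s')) * (?s' - ?s)"
    unfolding rec using pos by (simp add: field_simps)
  then have "\<bar>cf_alpha d j - cf_alpha d' j\<bar> = cf_alpha d j * cf_alpha d' j * \<bar>?s - ?s'\<bar>"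
    unfolding rec using pos by (simp add: abs_mult abs_minus_commute)
  then show ?case
    using step.IH step.hyps by (simp add: prod.atLeast_Suc_lessThan algebra_simps)
qed

lemma alpha_diff_weighted_le:
  assumes B: "\<bar>cf_alpha d M - cf_alpha d' M\<bar> * (1 + (D + 2) * ln (D + 1) + brjuno_tail d M) \<le> B"
    and "j \<le> M"
  shows "\<bar>cf_alpha d j - cf_alpha d' j\<bar> * (1 + brjuno_tail d j)
    \<le> (\<Prod>i\<in>{j..<M}. cf_alpha d i) * (\<Prod>i\<in>{j..<M}. cf_alpha d' i) * B"
proof -
  let ?e = "\<bar>cf_alpha d M - cf_alpha d' M\<bar>" and ?p = "\<Prod>i\<in>{j..<M}. cf_alpha d i"
    and ?p' = "\<Prod>i\<in>{j..<M}. cf_alpha d' i"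
  have p: "0 \<le> ?p" "?p \<le> 1" "0 \<le> ?p'"
    using prod_cf_alpha_nonneg prod_cf_alpha_le_1 ones_from by blast+
  have "?e * (1 + brjuno_tail d j) \<le> ?e * (1 + (D + 2) * ln (D + 1) + ?p * brjuno_tail d M)"
    using brjuno_tail_le[OF \<open>j \<le> M\<close>] by (intro mult_left_mono) auto
  also have "\<dots> \<le> ?e * (1 + (D + 2) * ln (D + 1) + brjuno_tail d M)"
    using p brjuno_tail_nonneg[OF ones_from(1)]
    by (intro mult_left_mono add_left_mono mult_left_le_one_le) auto
  also have "\<dots> \<le> B" by (rule B)
  finally have "?p * ?p' * (?e * (1 + brjuno_tail d j)) \<le> ?p * ?p' * B"
    using p by (intro mult_left_mono) auto
  then show ?thesis using alpha_diff_eq[OF \<open>j \<le> M\<close>] by (simp add: mult.assoc)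
qed

text \<open>Going from \<open>j + 1\<close> down to \<open>j\<close>, the bound is multiplied by \<open>\<alpha>'\<^sub>j\<close> and picks up the
  error bounded in alpha_diff_weighted_le; the slack term \<open>(D + 1) * (D + 2) * (1 - \<Prod>\<alpha>\<^sub>i)\<close>
  absorbs that error because \<open>(D + 1) * (D + 2) * \<alpha>'\<^sub>j * (1 - \<alpha>\<^sub>j) \<ge> 1\<close>.\<close>
lemma brjuno_tail_diff_le:
  assumes B: "\<bar>cf_alpha d M - cf_alpha d' M\<bar> * (1 + (D + 2) * ln (D + 1) + brjuno_tail d M) \<le> B"
      "\<bar>brjuno_tail d M - brjuno_tail d' M\<bar> \<le> B"
  shows "j \<le> M \<Longrightarrow> \<bar>brjuno_tail d j - brjuno_tail d' j\<bar>
    \<le> (\<Prod>i\<in>{j..<M}. cf_alpha d' i) * B * (1 + (D + 1) * (D + 2) * (1 - (\<Prod>i\<in>{j..<M}. cf_alpha d i)))"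
proof (induction j rule: inc_induct)
  case base
  then show ?case using B(2) by simp
next
  case (step j)
  let ?a = "cf_alpha d j" and ?a' = "cf_alpha d' j"
    and ?s = "cf_alpha d (Suc j)" and ?s' = "cf_alpha d' (Suc j)"
    and ?P = "brjuno_tail d (Suc j)" and ?P' = "brjuno_tail d' (Suc j)"
    and ?p = "\<Prod>i\<in>{Suc j..<M}. cf_alpha d i" and ?p' = "\<Prod>i\<in>{Suc j..<M}. cf_alpha d' i"
    and ?c = "(D + 1) * (D + 2)"
  have rec: "?a = 1 / (real (d j) + ?s)" "?a' = 1 / (real (d j) + ?s')"
    using cf_alpha_rec[OF ones_from(1), of j] cf_alpha_rec[OF ones_from(2), of j] agree step.hyps
    by auto
  have tail_rec: "brjuno_tail d j = ln (real (d j) + ?s) + ?P / (real (d j) + ?s)"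
      "brjuno_tail d' j = ln (real (d j) + ?s') + ?P' / (real (d j) + ?s')"
    using brjuno_tail_rec[OF ones_from(1), of j] brjuno_tail_rec[OF ones_from(2), of j] rec
    by simp_all
  have "\<bar>brjuno_tail d j - brjuno_tail d' j\<bar> \<le> \<bar>?s - ?s'\<bar> * (1 + ?P) + ?a' * \<bar>?P - ?P'\<bar>"
    unfolding tail_rec rec(2)
    using cf_alpha_pos[OF ones_from(1)] cf_alpha_pos[OF ones_from(2)]
      ones_from_digit_ge_1[OF ones_from(1)] brjuno_tail_nonneg[OF ones_from(1)]
    by (simp add: brjuno_step_lipschitz)
  moreover have "\<bar>?s - ?s'\<bar> * (1 + ?P) \<le> ?p * ?p' * B"
    using alpha_diff_weighted_le[OF B(1)] step.hyps by simp
  moreover have "?a' * \<bar>?P - ?P'\<bar> \<le> ?a' * (?p' * B * (1 + ?c * (1 - ?p)))"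
    using step.IH cf_alpha_pos[OF ones_from(2), of j] by (intro mult_left_mono) auto
  moreover have "?p * ?p' * B \<le> ?p * ?p' * B * (?c * ?a' * (1 - ?a))"
  proof -
    have "0 \<le> ?p * ?p' * B"
      using prod_cf_alpha_nonneg[OF ones_from(1)] prod_cf_alpha_nonneg[OF ones_from(2)] B(2)
      by (intro mult_nonneg_nonneg) auto
    then show ?thesis using mult_left_mono[OF alpha_gap_ge[OF step.hyps(2)]] by simp
  qed
  moreover have "(\<Prod>i\<in>{j..<M}. cf_alpha d' i) * B * (1 + ?c * (1 - (\<Prod>i\<in>{j..<M}. cf_alpha d i)))
      = ?a' * (?p' * B * (1 + ?c * (1 - ?p))) + ?p * ?p' * B * (?c * ?a' * (1 - ?a))"
    using step.hyps by (simp add: prod.atLeast_Suc_lessThan algebra_simps)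
  ultimately show ?case by linarith
qed

lemma brjuno_Phi_diff_le:
  assumes "\<bar>cf_alpha d M - cf_alpha d' M\<bar> * (1 + (D + 2) * ln (D + 1) + brjuno_tail d M) \<le> B"
      "\<bar>brjuno_tail d M - brjuno_tail d' M\<bar> \<le> B"
  shows "\<bar>brjuno_Phi d - brjuno_Phi d'\<bar> \<le> ((D + 1) / (D + 2)) ^ M * (1 + (D + 1) * (D + 2)) * B"
proof -
  let ?p = "\<Prod>i\<in>{0..<M}. cf_alpha d i" and ?p' = "\<Prod>i\<in>{0..<M}. cf_alpha d' i"
  have B: "0 \<le> B" using assms(2) by linarith
  have "\<bar>brjuno_Phi d - brjuno_Phi d'\<bar> \<le> ?p' * B * (1 + (D + 1) * (D + 2) * (1 - ?p))"
    using brjuno_tail_diff_le[OF assms, of 0] by simp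
  also have "\<dots> \<le> ?p' * B * (1 + (D + 1) * (D + 2))"
    using prod_cf_alpha_nonneg[OF ones_from(1)] prod_cf_alpha_nonneg[OF ones_from(2)] B D_ge_1
    by (intro mult_left_mono) (auto intro!: mult_nonneg_nonneg)
  also have "\<dots> \<le> ((D + 1) / (D + 2)) ^ M * B * (1 + (D + 1) * (D + 2))"
    using agreeing_digits.prod_alpha_le_power[OF swap] B D_ge_1
    by (intro mult_right_mono) (auto intro!: mult_nonneg_nonneg)
  finally show ?thesis by (simp add: mult_ac)
qed

end

context
  fixes d d' :: "nat \<Rightarrow> nat" and L N :: nat
  assumes ones: "ones_from (L + 2) d" "ones_from (L + 2) d'"
    and digit_L: "d L = 1" "d' L = 1"
    and digit_Suc_L: "d (Suc L) = N" "d' (Suc L) = N + 1"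
begin

private lemma N_ge_1: "1 \<le> real N"
  using ones_from_digit_ge_1[OF ones(1), of "Suc L"] digit_Suc_L by simp

private lemma alpha_Suc_L:
  "cf_alpha d (Suc L) = 1 / (real N + inv_golden_ratio)"
  "cf_alpha d' (Suc L) = 1 / (real N + 1 + inv_golden_ratio)"
  using cf_alpha_rec[OF ones(1), of "Suc L"] cf_alpha_rec[OF ones(2), of "Suc L"]
    cf_alpha_ones[OF ones(1), of "Suc (Suc L)"] cf_alpha_ones[OF ones(2), of "Suc (Suc L)"]
    digit_Suc_L by simp_all

private lemma alpha_Suc_L_bounds:
  "0 < cf_alpha d' (Suc L)" "cf_alpha d' (Suc L) \<le> cf_alpha d (Suc L)" "cf_alpha d (Suc L) \<le> 1"
  unfolding alpha_Suc_L using N_ge_1 inv_golden_ratio_pos by (auto simp: frac_le)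

private lemma ln_inverse_alpha_Suc_L_diff:
  "\<bar>ln (1 / cf_alpha d (Suc L)) - ln (1 / cf_alpha d' (Suc L))\<bar> \<le> 1"
  unfolding alpha_Suc_L
  using abs_ln_diff_le[of "real N + inv_golden_ratio" "real N + 1 + inv_golden_ratio"]
    N_ge_1 inv_golden_ratio_pos by simp

private lemma brjuno_tail_Suc_L:
  "brjuno_tail d (Suc L) = ln (1 / cf_alpha d (Suc L)) + cf_alpha d (Suc L) * brjuno_Phi (\<lambda>_. 1)"
  "brjuno_tail d' (Suc L) = ln (1 / cf_alpha d' (Suc L)) + cf_alpha d' (Suc L) * brjuno_Phi (\<lambda>_. 1)"
  using brjuno_tail_rec[OF ones(1), of "Suc L"] brjuno_tail_rec[OF ones(2), of "Suc L"]
    brjuno_tail_ones[OF ones(1), of "Suc (Suc L)"] brjuno_tail_ones[OF ones(2), of "Suc (Suc L)"]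
  by simp_all

private lemma alpha_L:
  "cf_alpha d L = 1 / (1 + cf_alpha d (Suc L))" "cf_alpha d' L = 1 / (1 + cf_alpha d' (Suc L))"
  using cf_alpha_rec[OF ones(1), of L] cf_alpha_rec[OF ones(2), of L] digit_L by simp_all

private lemma brjuno_tail_L:
  "brjuno_tail d L = ln (1 + cf_alpha d (Suc L)) + brjuno_tail d (Suc L) / (1 + cf_alpha d (Suc L))"
  "brjuno_tail d' L = ln (1 + cf_alpha d' (Suc L)) + brjuno_tail d' (Suc L) / (1 + cf_alpha d' (Suc L))"
  using brjuno_tail_rec[OF ones(1), of L] brjuno_tail_rec[OF ones(2), of L] alpha_L by simp_all

lemma tail_alpha_diff_le:
  assumes "0 \<le> K"
  shows "\<bar>cf_alpha d L - cf_alpha d' L\<bar> * (1 + K + brjuno_tail d L) \<le> 3 + K + brjuno_Phi (\<lambda>_. 1)"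
proof -
  let ?x = "cf_alpha d (Suc L)" and ?x' = "cf_alpha d' (Suc L)" and ?C = "brjuno_Phi (\<lambda>_. 1)"
  have x: "0 < ?x'" "?x' \<le> ?x" "?x \<le> 1" by (fact alpha_Suc_L_bounds)+
  have C: "0 \<le> ?C" by (rule brjuno_Phi_nonneg[of 0]) (simp add: ones_from_def)
  have "cf_alpha d L - cf_alpha d' L = (?x' - ?x) / ((1 + ?x) * (1 + ?x'))"
    unfolding alpha_L using x by (simp add: field_simps)
  also have "\<bar>\<dots>\<bar> \<le> \<bar>?x' - ?x\<bar>"
    using x mult_mono[of 1 "1 + ?x" 1 "1 + ?x'"] by (simp add: abs_div divide_le_eq mult_le_cancel_left1)
  also have "\<dots> \<le> ?x" using x by simp
  finally have alpha_diff: "\<bar>cf_alpha d L - cf_alpha d' L\<bar> \<le> ?x" .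
  have "brjuno_tail d (Suc L) / (1 + ?x) \<le> brjuno_tail d (Suc L)"
    using x brjuno_tail_nonneg[OF ones(1), of "Suc L"]
    by (simp add: divide_le_eq mult_le_cancel_left1)
  moreover have "ln (1 + ?x) \<le> ?x" using x by (intro ln_add_one_self_le_self) auto
  moreover have "?x * ?C \<le> ?C" using x C by (intro mult_left_le_one_le) auto
  ultimately have "brjuno_tail d L \<le> 1 + ln (1 / ?x) + ?C"
    unfolding brjuno_tail_L brjuno_tail_Suc_L using x by linarith
  then have "\<bar>cf_alpha d L - cf_alpha d' L\<bar> * (1 + K + brjuno_tail d L)
      \<le> ?x * (2 + K + ?C) + ?x * ln (1 / ?x)"
    using alpha_diff assms brjuno_tail_nonneg[OF ones(1), of L]
    by (simp add: distrib_left[symmetric]) (intro mult_mono; simp)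
  also have "\<dots> \<le> 1 * (2 + K + ?C) + 1"
    using x assms C mult_ln_inverse_le_1[of ?x] by (intro add_mono mult_right_mono) auto
  finally show ?thesis by simp
qed

lemma tail_Phi_diff_le: "\<bar>brjuno_tail d L - brjuno_tail d' L\<bar> \<le> 3 + 2 * brjuno_Phi (\<lambda>_. 1)"
proof -
  let ?x = "cf_alpha d (Suc L)" and ?x' = "cf_alpha d' (Suc L)" and ?C = "brjuno_Phi (\<lambda>_. 1)"
    and ?P = "brjuno_tail d (Suc L)" and ?P' = "brjuno_tail d' (Suc L)"
  have x: "0 < ?x'" "?x' \<le> ?x" "?x \<le> 1" by (fact alpha_Suc_L_bounds)+
  have C: "0 \<le> ?C" by (rule brjuno_Phi_nonneg[of 0]) (simp add: ones_from_def)
  have "\<bar>brjuno_tail d L - brjuno_tail d' L\<bar> \<le> \<bar>?x - ?x'\<bar> * (1 + ?P) + \<bar>?P - ?P'\<bar> / (1 + ?x')"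
    unfolding brjuno_tail_L using x brjuno_tail_nonneg[OF ones(1)]
    by (intro brjuno_step_lipschitz) auto
  moreover have "\<bar>?x - ?x'\<bar> * (1 + ?P) \<le> 2 + ?C"
  proof -
    have "\<bar>?x - ?x'\<bar> * (1 + ?P) \<le> ?x * (1 + ?P)"
      using x brjuno_tail_nonneg[OF ones(1), of "Suc L"] by (intro mult_right_mono) auto
    also have "\<dots> = ?x + ?x * ln (1 / ?x) + ?x * (?x * ?C)"
      unfolding brjuno_tail_Suc_L by (simp add: algebra_simps)
    also have "\<dots> \<le> 1 + 1 + ?C"
    proof -
      have "?x * (?x * ?C) \<le> ?C"
        using x C by (intro order.trans[OF mult_left_le_one_le mult_left_le_one_le]) auto
      then show ?thesis using x mult_ln_inverse_le_1[of ?x] by linarith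
    qed
    finally show ?thesis by simp
  qed
  moreover have "\<bar>?P - ?P'\<bar> / (1 + ?x') \<le> 1 + ?C"
  proof -
    have "?P - ?P' = (ln (1 / ?x) - ln (1 / ?x')) + (?x - ?x') * ?C"
      unfolding brjuno_tail_Suc_L by (simp add: algebra_simps)
    also have "\<bar>\<dots>\<bar> \<le> 1 + ?C"
      using ln_inverse_alpha_Suc_L_diff x C mult_left_le_one_le[of ?C "?x - ?x'"]
      by (simp add: abs_mult abs_triangle_ineq order.trans[OF abs_triangle_ineq] add_mono)
    finally have "\<bar>?P - ?P'\<bar> \<le> 1 + ?C" .
    moreover have "\<bar>?P - ?P'\<bar> / (1 + ?x') \<le> \<bar>?P - ?P'\<bar>"
      using x by (simp add: divide_le_eq mult_le_cancel_left1)
    ultimately show ?thesis by linarith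
  qed
  ultimately show ?thesis by linarith
qed

end

lemma ones_from_beta_digits:
  assumes "\<forall>i\<le>n. 0 < a i" "1 \<le> N"
  shows "ones_from (n + m + 1) (beta_digits a n m N)"
  using assms unfolding ones_from_def beta_digits_def by (auto simp: Suc_le_eq)

lemma agreeing_digits_beta_digits:
  assumes "\<forall>i\<le>n. 0 < a i" "1 \<le> N" "1 \<le> m"
  shows "agreeing_digits (beta_digits a n m N) (beta_digits a n m (N + 1)) (n + m + 1) (n + m - 1)
    (real (Max (a ` {..n})))"
proof -
  have a_le: "a i \<le> Max (a ` {..n})" if "i \<le> n" for i using that by (intro Max_ge) auto
  have "1 \<le> Max (a ` {..n})" using less_le_trans[OF _ a_le[of 0]] assms(1) by (simp add: Suc_le_eq)
  then have "beta_digits a n m N' j \<le> Max (a ` {..n})" if "j \<le> n + m - 1" for N' j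
    using that a_le assms(3) unfolding beta_digits_def by auto
  then show ?thesis
    using assms ones_from_beta_digits[of n a] unfolding agreeing_digits_def
    by (auto simp: beta_digits_def)
qed

lemma brjuno_Phi_beta_digits_diff_decay:
  assumes "\<forall>i\<le>n. 0 < a i"
  obtains r W :: real where "0 < r" "r < 1" "0 < W"
    "\<And>m N. 2 \<le> m \<Longrightarrow> 1 \<le> N \<Longrightarrow>
      \<bar>brjuno_Phi (beta_digits a n m N) - brjuno_Phi (beta_digits a n m (N + 1))\<bar> \<le> r ^ (n + m - 1) * W"
proof -
  define D where "D = real (Max (a ` {..n}))"
  define C where "C = brjuno_Phi (\<lambda>_. 1)"
  define B where "B = 3 + (D + 2) * ln (D + 1) + 2 * C"
  have D: "1 \<le> D" using agreeing_digits.D_ge_1[OF agreeing_digits_beta_digits[OF assms, of 1 1]]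
    unfolding D_def by simp
  have C: "0 \<le> C" unfolding C_def by (rule brjuno_Phi_nonneg[of 0]) (simp add: ones_from_def)
  have K: "0 \<le> (D + 2) * ln (D + 1)" using D by simp
  have B: "0 < B" unfolding B_def using K C by simp
  show thesis
  proof (rule that[of "(D + 1) / (D + 2)" "(1 + (D + 1) * (D + 2)) * B"])
    show "0 < (D + 1) / (D + 2)" "(D + 1) / (D + 2) < 1" "0 < (1 + (D + 1) * (D + 2)) * B"
      using D B by (auto intro!: mult_pos_pos add_pos_nonneg)
    fix m N :: nat
    assume m: "2 \<le> m" and N: "1 \<le> N"
    let ?d = "beta_digits a n m N" and ?d' = "beta_digits a n m (N + 1)" and ?L = "n + m - 1"
    interpret agreeing_digits ?d ?d' "n + m + 1" ?L D
      unfolding D_def using agreeing_digits_beta_digits[OF assms N] m by simp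
    have ones: "ones_from (?L + 2) ?d" "ones_from (?L + 2) ?d'" using ones_from m by simp_all
    have digits: "?d ?L = 1" "?d' ?L = 1" "?d (Suc ?L) = N" "?d' (Suc ?L) = N + 1"
      using m unfolding beta_digits_def by auto
    have "\<bar>cf_alpha ?d ?L - cf_alpha ?d' ?L\<bar> * (1 + (D + 2) * ln (D + 1) + brjuno_tail ?d ?L) \<le> B"
      using tail_alpha_diff_le[OF ones digits K] C unfolding B_def C_def by simp
    moreover have "\<bar>brjuno_tail ?d ?L - brjuno_tail ?d' ?L\<bar> \<le> B"
      using tail_Phi_diff_le[OF ones digits] K unfolding B_def C_def by simp
    ultimately show "\<bar>brjuno_Phi ?d - brjuno_Phi ?d'\<bar>
        \<le> ((D + 1) / (D + 2)) ^ ?L * ((1 + (D + 1) * (D + 2)) * B)"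
      using brjuno_Phi_diff_le by (simp add: mult_ac)
  qed
qed

theorem mainTheorem9:
  fixes a :: "nat \<Rightarrow> nat" and n :: nat and \<epsilon> :: real
  assumes "\<forall>i\<le>n. a i > 0"
    and "\<epsilon> > 0"
  shows "\<exists>m0::nat. m0 > 0 \<and> (\<forall>m\<ge>m0. \<forall>N::nat. N \<ge> 1 \<longrightarrow>
           brjuno_Phi (beta_digits a n m (N + 1)) - brjuno_Phi (beta_digits a n m N) < \<epsilon>)"
proof -
  obtain r W :: real where r: "0 < r" "r < 1" and W: "0 < W" and decay:
    "\<And>m N. 2 \<le> m \<Longrightarrow> 1 \<le> N \<Longrightarrow>
      \<bar>brjuno_Phi (beta_digits a n m N) - brjuno_Phi (beta_digits a n m (N + 1))\<bar> \<le> r ^ (n + m - 1) * W"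
    using brjuno_Phi_beta_digits_diff_decay[OF assms(1)] by blast
  obtain k where k: "r ^ k < \<epsilon> / W" using real_arch_pow_inv[of "\<epsilon> / W" r] r W assms(2) by auto
  have "brjuno_Phi (beta_digits a n m (N + 1)) - brjuno_Phi (beta_digits a n m N) < \<epsilon>"
    if "k + 2 \<le> m" "1 \<le> N" for m N
  proof -
    have "r ^ (n + m - 1) * W \<le> r ^ k * W"
      using that r W by (intro mult_right_mono power_decreasing) auto
    also have "\<dots> < \<epsilon>" using k W by (simp add: pos_less_divide_eq)
    finally show ?thesis using decay[of m N] that by linarith
  qed
  then show ?thesis by (intro exI[of _ "k + 2"]) auto
qed

end
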